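(* Let $P$ be a finite point set in the plane in general position and let $W$ be a finite point set with $P\cup W$ in general position. If no edge of the Delaunay triangulation $\mathrm{DT}(P)$ is an edge of $\mathrm{DG}^-(P,W)$, then $\mathrm{DG}^-(P,W)$ has no edges.
   Context: Let $P$ (the vertices) and $W$ (the witnesses) be finite point sets in $\mathbb{R}^2$; $P$ and $W$ may share points. The witness Delaunay graph $\mathrm{DG}^-(P,W)$ is the graph with vertex set $P$ in which distinct $x,y\in P$ are adjacent if and only if there is an open disk containing no point of $W$ whose bounding circle passes through $x$ and $y$. General position means that no three distinct points are collinear and no four distinct points are concyclic. For a finite point set $Q$ in general position, $\mathrm{DT}(Q)$ is its Delaunay triangulation: distinct $a,b\in Q$ are joined iff some open disk whose boundary passes through $a$ and $b$ contains no point of $Q$. *)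

theory Defs
  imports "HOL-Analysis.Analysis"
begin

type_synonym point = "real \<times> real"

definition concyclic :: "point \<Rightarrow> point \<Rightarrow> point \<Rightarrow> point \<Rightarrow> bool" where
  "concyclic a b c d \<longleftrightarrow> (\<exists>(z::point) (r::real). r > 0 \<and>
      dist a z = r \<and> dist b z = r \<and> dist c z = r \<and> dist d z = r)"

definition general_position :: "point set \<Rightarrow> bool" where
  "general_position S \<longleftrightarrow>
     (\<forall>a\<in>S. \<forall>b\<in>S. \<forall>c\<in>S. distinct [a,b,c] \<longrightarrow> \<not> collinear {a,b,c}) \<and>
     (\<forall>a\<in>S. \<forall>b\<in>S. \<forall>c\<in>S. \<forall>d\<in>S. distinct [a,b,c,d] \<longrightarrow> \<not> concyclic a b c d)"

definition empty_disk_through :: "point set \<Rightarrow> point \<Rightarrow> point \<Rightarrow> bool" where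
  "empty_disk_through W x y \<longleftrightarrow> (\<exists>(z::point) (r::real). r > 0 \<and>
      dist x z = r \<and> dist y z = r \<and> ball z r \<inter> W = {})"

definition witness_DG_edge :: "point set \<Rightarrow> point set \<Rightarrow> point \<Rightarrow> point \<Rightarrow> bool" where
  "witness_DG_edge P W x y \<longleftrightarrow> x \<in> P \<and> y \<in> P \<and> x \<noteq> y \<and> empty_disk_through W x y"

definition DT_edge :: "point set \<Rightarrow> point \<Rightarrow> point \<Rightarrow> bool" where
  "DT_edge Q a b \<longleftrightarrow> a \<in> Q \<and> b \<in> Q \<and> a \<noteq> b \<and> empty_disk_through Q a b"

end

theory Submission
  imports Defs
begin

(* Let xy be an edge of DG^-(P,W), witnessed by an open disk D with
   x, y on its boundary and no point of W inside.  If D also contains no point of P, then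
   xy is an edge of DT(P) as well.  Otherwise we shrink D: consider the pencil of disks
   tangent to D at x, with centres x + t(z - x) for 0 < t <= 1.  Each of them lies inside
   D, hence is W-empty, and a point q lies in the disk with parameter t iff
   |q - x|^2 < 2t<q - x, z - x>.  Taking the smallest t for which the boundary circle
   meets a point p of P (a minimum over the finite set P) gives a P-empty disk through
   x and p inside D, so xp is an edge of both DT(P) and DG^-(P,W). *)

lemma norm_diff_ray_sq:
  fixes q x v :: "'a::real_inner"
  shows "(norm (q - (x + t *\<^sub>R v)))\<^sup>2 = (norm (q - x))\<^sup>2 - 2*t*inner (q - x) v + t\<^sup>2 * (norm v)\<^sup>2"
proof -
  have "q - (x + t *\<^sub>R v) = (q - x) - t *\<^sub>R v" by (simp add: algebra_simps)
  then show ?thesis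
    unfolding power2_norm_eq_inner
    by (simp add: inner_diff_left inner_diff_right inner_commute power2_eq_square algebra_simps)
qed

text \<open>The disks with centre \<open>x + t v\<close> and radius \<open>t |v|\<close> all pass through \<open>x\<close>; a point
  \<open>q\<close> lies in the open disk resp. on its circle iff the following linear-in-\<open>t\<close>
  conditions hold.  This is what makes the smallest disk of the pencil a minimum.\<close>
lemma pencil_ball_iff:
  fixes q x v :: "'a::real_inner"
  assumes "t > 0"
  shows "dist q (x + t *\<^sub>R v) < t * norm v \<longleftrightarrow> (norm (q - x))\<^sup>2 < 2*t*inner (q - x) v"
proof -
  have "dist q (x + t *\<^sub>R v) < t * norm v \<longleftrightarrow> (norm (q - (x + t *\<^sub>R v)))\<^sup>2 < (t * norm v)\<^sup>2"
    using assms power2_less_imp_less[of "norm (q - (x + t *\<^sub>R v))" "t * norm v"]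
    by (auto simp: dist_norm norm_minus_commute intro: power_strict_mono)
  then show ?thesis by (simp add: norm_diff_ray_sq power_mult_distrib)
qed

lemma pencil_sphere_iff:
  fixes q x v :: "'a::real_inner"
  assumes "t > 0"
  shows "dist q (x + t *\<^sub>R v) = t * norm v \<longleftrightarrow> (norm (q - x))\<^sup>2 = 2*t*inner (q - x) v"
proof -
  have "dist q (x + t *\<^sub>R v) = t * norm v \<longleftrightarrow> (norm (q - (x + t *\<^sub>R v)))\<^sup>2 = (t * norm v)\<^sup>2"
    using assms by (simp add: dist_norm power2_eq_iff_nonneg)
  then show ?thesis by (simp add: norm_diff_ray_sq power_mult_distrib)
qed

lemma pencil_ball_subset:
  fixes x v :: "'a::real_inner"
  assumes "0 \<le> t" "t \<le> 1"
  shows "ball (x + t *\<^sub>R v) (t * norm v) \<subseteq> ball (x + v) (norm v)"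
proof
  fix w assume "w \<in> ball (x + t *\<^sub>R v) (t * norm v)"
  then have w: "dist (x + t *\<^sub>R v) w < t * norm v" by simp
  have "dist (x + t *\<^sub>R v) (x + v) = norm ((1 - t) *\<^sub>R v)"
    by (simp add: dist_norm norm_minus_commute algebra_simps)
  also have "\<dots> = (1 - t) * norm v" using assms by simp
  finally have "dist (x + v) w < norm v"
    using w dist_triangle[of "x + v" w "x + t *\<^sub>R v"] by (simp add: dist_commute algebra_simps)
  then show "w \<in> ball (x + v) (norm v)" by simp
qed

lemma shrink_disk_to_point:
  fixes x z :: "'a::real_inner"
  assumes r: "dist x z = r" and fin: "finite P" and p1: "p1 \<in> P" "p1 \<in> ball z r"
  shows "\<exists>p\<in>P. p \<noteq> x \<and> (\<exists>z' r'. r' > 0 \<and> dist x z' = r' \<and> dist p z' = r'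
           \<and> ball z' r' \<inter> P = {} \<and> ball z' r' \<subseteq> ball z r)"
proof -
  define v where "v = z - x"
  have z: "z = x + v" and nv: "norm v = r"
    using r by (simp_all add: v_def dist_norm norm_minus_commute)
  text \<open>The points of \<open>P\<close> on the far side of \<open>x\<close>, and the pencil parameter at which
    each of them enters the disk.\<close>
  define S where "S = {p\<in>P. inner (p - x) v > 0}"
  define f where "f p = (norm (p - x))\<^sup>2 / (2 * inner (p - x) v)" for p
  have h1: "(norm (p1 - x))\<^sup>2 < 2 * inner (p1 - x) v"
    using p1(2) pencil_ball_iff[of 1 p1 x v] by (simp add: z nv dist_commute)
  then have d1: "inner (p1 - x) v > 0" by (smt (verit) zero_le_power2)
  then have p1S: "p1 \<in> S" using p1 by (simp add: S_def)
  have f1: "f p1 < 1" using h1 d1 by (simp add: f_def divide_less_eq)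
  have finS: "finite S" using fin by (simp add: S_def)
  define t where "t = Min (f ` S)"
  have tle: "\<And>q. q \<in> S \<Longrightarrow> t \<le> f q" unfolding t_def using finS by auto
  have "t \<in> f ` S" unfolding t_def using finS p1S by (intro Min_in) auto
  then obtain p where pS: "p \<in> S" and tp: "t = f p" by auto
  have t1: "t < 1" using tle[OF p1S] f1 by simp
  have dp: "inner (p - x) v > 0" using pS by (simp add: S_def)
  then have px: "p \<noteq> x" by auto
  then have tpos: "t > 0" using dp by (simp add: tp f_def)
  define z' where "z' = x + t *\<^sub>R v"
  define r' where "r' = t * norm v"
  have "dist x z' = r'" using tpos by (simp add: z'_def r'_def dist_norm)
  moreover have "dist p z' = r'"
    using pencil_sphere_iff[OF tpos, of p x v] dp by (simp add: z'_def r'_def tp f_def)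
  moreover have "ball z' r' \<inter> P = {}"
  proof (rule ccontr)
    assume "ball z' r' \<inter> P \<noteq> {}"
    then obtain q where q: "q \<in> P" "dist q z' < r'" by (auto simp: dist_commute)
    then have hq: "(norm (q - x))\<^sup>2 < 2*t*inner (q - x) v"
      using pencil_ball_iff[OF tpos, of q x v] by (simp add: z'_def r'_def)
    then have dq: "inner (q - x) v > 0" using tpos
      by (smt (verit) zero_le_power2 mult_pos_pos mult_nonneg_nonpos)
    then have "t \<le> f q" using q by (intro tle) (simp add: S_def)
    then have "t * (2 * inner (q - x) v) \<le> (norm (q - x))\<^sup>2" using dq
      by (simp add: f_def le_divide_eq)
    then show False using hq by (simp add: algebra_simps)
  qed
  moreover have "ball z' r' \<subseteq> ball z r"
    using pencil_ball_subset[of t x v] tpos t1 by (simp add: z'_def r'_def z nv)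
  moreover have "r' > 0"
  proof -
    have "v \<noteq> 0" using dp by auto
    then show ?thesis using tpos by (simp add: r'_def)
  qed
  ultimately show ?thesis using pS px unfolding S_def by blast
qed

lemma witness_edge_yields_common_edge:
  fixes P W :: "point set"
  assumes "finite P" and "witness_DG_edge P W x y"
  shows "\<exists>p. DT_edge P x p \<and> witness_DG_edge P W x p"
proof -
  have xy: "x \<in> P" "y \<in> P" "x \<noteq> y" using assms(2) by (auto simp: witness_DG_edge_def)
  obtain z r where zr: "r > 0" "dist x z = r" "dist y z = r" "ball z r \<inter> W = {}"
    using assms(2) unfolding witness_DG_edge_def empty_disk_through_def by blast
  show ?thesis
  proof (cases "ball z r \<inter> P = {}")
    case True
    then have "DT_edge P x y" using zr xy unfolding DT_edge_def empty_disk_through_def by blast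
    then show ?thesis using assms(2) by blast
  next
    case False
    then obtain p1 where "p1 \<in> P" "p1 \<in> ball z r" by auto
    from shrink_disk_to_point[OF zr(2) assms(1) this] obtain p z' r' where
      p: "p \<in> P" "p \<noteq> x" "r' > 0" "dist x z' = r'" "dist p z' = r'"
      "ball z' r' \<inter> P = {}" "ball z' r' \<subseteq> ball z r" by blast
    have "DT_edge P x p" using p xy unfolding DT_edge_def empty_disk_through_def by blast
    moreover have "witness_DG_edge P W x p" using p xy zr(4)
      unfolding witness_DG_edge_def empty_disk_through_def by blast
    ultimately show ?thesis by blast
  qed
qed

theorem mainTheorem13:
  fixes P W :: "point set"
  assumes "finite P" and "finite W"
    and "general_position P"
    and "general_position (P \<union> W)"
    and "\<forall>a b. DT_edge P a b \<longrightarrow> \<not> witness_DG_edge P W a b"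
  shows "\<forall>x y. \<not> witness_DG_edge P W x y"
  using witness_edge_yields_common_edge[OF assms(1)] assms(5) by blast

end
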